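(* Let $G=(V,E)$ be a simple undirected graph and let $i\in V$ have degree $\delta$. Assume that no two nodes of $N(i)$ are adjacent (equivalently in the paper's terms, $f_2(S^i,k)=0$ for all $k\in N(i)$). Consider the greedy procedure that starts with $S=\{i\}$ and repeatedly adds to $S$ a node $k\in N(i)\setminus S$ maximizing $f_1(S,k)$ among those with $f_1(S,k)>0$, until no such node exists. Then this procedure has approximation ratio $O(\ln\delta)$ with respect to the star degree centrality $\mathcal{C}^s(i)$, i.e., $\mathcal{C}^s(i)/|N(S)|=O(\ln\delta)$ for the returned $S$.
   Context: For $S\subseteq V$, $N(S)=\{j\in V\setminus S : (a,j)\in E \text{ for some } a\in S\}$. A set $S$ forms an induced star if $G[S]$ has exactly one node of degree $|S|-1$ and $|S|-1$ nodes of degree $1$. $\mathcal{C}^s(i)=\max\{|N(S)| : S \text{ forms an induced star centered at } i\}$. For an induced star $S^i$ centered at $i$ and a node $k$: $f_1(S,k)=|N(S\cup\{k\})|-|N(S)|$ and $f_2(S^i,k)=\sum_{j:(i,j)\in E,(k,j)\in E}|N(S^i\cup\{j\})\setminus N(S^i)|$. *)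

theory Defs
  imports Complex_Main
begin

definition simple_graph :: "nat set \<Rightarrow> (nat \<Rightarrow> nat \<Rightarrow> bool) \<Rightarrow> bool" where
  "simple_graph V E \<longleftrightarrow> finite V \<and> (\<forall>u v. E u v \<longrightarrow> E v u) \<and> (\<forall>v. \<not> E v v)
     \<and> (\<forall>u v. E u v \<longrightarrow> u \<in> V \<and> v \<in> V)"

definition nbhd :: "nat set \<Rightarrow> (nat \<Rightarrow> nat \<Rightarrow> bool) \<Rightarrow> nat set \<Rightarrow> nat set" where
  "nbhd V E S = {j \<in> V - S. \<exists>a\<in>S. E a j}"

definition degree :: "nat set \<Rightarrow> (nat \<Rightarrow> nat \<Rightarrow> bool) \<Rightarrow> nat \<Rightarrow> nat" where
  "degree V E i = card {j \<in> V. E i j}"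

definition deg_in :: "(nat \<Rightarrow> nat \<Rightarrow> bool) \<Rightarrow> nat set \<Rightarrow> nat \<Rightarrow> nat" where
  "deg_in E S v = card {u \<in> S. E v u}"

definition induced_star_at :: "nat set \<Rightarrow> (nat \<Rightarrow> nat \<Rightarrow> bool) \<Rightarrow> nat set \<Rightarrow> nat \<Rightarrow> bool" where
  "induced_star_at V E S i \<longleftrightarrow> finite S \<and> S \<subseteq> V \<and> i \<in> S \<and>
     deg_in E S i = card S - 1 \<and> (\<forall>v \<in> S - {i}. deg_in E S v = 1)"

definition star_centrality :: "nat set \<Rightarrow> (nat \<Rightarrow> nat \<Rightarrow> bool) \<Rightarrow> nat \<Rightarrow> nat" where
  "star_centrality V E i = Max {card (nbhd V E S) | S. induced_star_at V E S i}"

definition f1 :: "nat set \<Rightarrow> (nat \<Rightarrow> nat \<Rightarrow> bool) \<Rightarrow> nat set \<Rightarrow> nat \<Rightarrow> int" where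
  "f1 V E S k = int (card (nbhd V E (insert k S))) - int (card (nbhd V E S))"

definition greedy_step :: "nat set \<Rightarrow> (nat \<Rightarrow> nat \<Rightarrow> bool) \<Rightarrow> nat \<Rightarrow> nat set \<Rightarrow> nat set \<Rightarrow> bool" where
  "greedy_step V E i S S' \<longleftrightarrow> (\<exists>k \<in> nbhd V E {i} - S. 0 < f1 V E S k \<and>
      (\<forall>k' \<in> nbhd V E {i} - S. 0 < f1 V E S k' \<longrightarrow> f1 V E S k' \<le> f1 V E S k) \<and> S' = insert k S)"

definition greedy_stops :: "nat set \<Rightarrow> (nat \<Rightarrow> nat \<Rightarrow> bool) \<Rightarrow> nat \<Rightarrow> nat set \<Rightarrow> bool" where
  "greedy_stops V E i S \<longleftrightarrow> \<not> (\<exists>k \<in> nbhd V E {i} - S. 0 < f1 V E S k)"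

definition greedy_output :: "nat set \<Rightarrow> (nat \<Rightarrow> nat \<Rightarrow> bool) \<Rightarrow> nat \<Rightarrow> nat set \<Rightarrow> bool" where
  "greedy_output V E i S \<longleftrightarrow> (greedy_step V E i)\<^sup>*\<^sup>* {i} S \<and> greedy_stops V E i S"

end

theory Submission
  imports Defs
begin

text \<open>The greedy procedure is in fact a 2-approximation. Every induced star centred at i lies inside the closed
  neighbourhood {i} \<union> N(i), so its neighbourhood lies in N(i) \<union> W, where W is the
  neighbourhood of the closed neighbourhood. Greedy steps never shrink |N(S)|, so
  |N(i)| \<le> |N(S)|. When greedy stops, adding any remaining a \<in> N(i) - S gains at most one
  new node (a itself leaves N(S)), so the nodes of W missed by N(S) are at most
  |N(i) - S| many; as N(i) - S \<subseteq> N(S) is disjoint from W, also |W| \<le> |N(S)|.\<close>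

lemma finite_nbhd: "finite V \<Longrightarrow> finite (nbhd V E S)"
  by (simp add: nbhd_def)

lemma nbhd_subset_of_subset:
  assumes "S \<subseteq> T"
  shows "nbhd V E S \<subseteq> (T - S) \<union> nbhd V E T"
  using assms by (auto simp: nbhd_def)

lemma induced_star_subset_closed_nbhd:
  assumes sg: "simple_graph V E" and st: "induced_star_at V E S i"
  shows "S \<subseteq> insert i (nbhd V E {i})"
proof -
  have fin: "finite S" and SV: "S \<subseteq> V" and iS: "i \<in> S"
    and deg: "card {u \<in> S. E i u} = card (S - {i})"
    using st by (auto simp: induced_star_at_def deg_in_def)
  have "{u \<in> S. E i u} \<subseteq> S - {i}"
    using sg by (auto simp: simple_graph_def)
  then have "{u \<in> S. E i u} = S - {i}"
    using fin deg by (simp add: card_subset_eq)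
  then show ?thesis
    using SV by (auto simp: nbhd_def)
qed

lemma star_centrality_le:
  assumes "i \<in> V" and sg: "simple_graph V E"
    and bound: "\<And>S. induced_star_at V E S i \<Longrightarrow> card (nbhd V E S) \<le> b"
  shows "star_centrality V E i \<le> b"
proof -
  let ?M = "{card (nbhd V E S) | S. induced_star_at V E S i}"
  have "induced_star_at V E {i} i"
    using assms by (simp add: induced_star_at_def deg_in_def simple_graph_def)
  then have "?M \<noteq> {}" by blast
  moreover have "finite ?M"
    using bound by (auto intro: finite_nat_set_iff_bounded_le[THEN iffD2])
  ultimately show ?thesis
    using bound by (auto simp: star_centrality_def Max_le_iff)
qed

lemma greedy_reachable_invariant:
  assumes "(greedy_step V E i)\<^sup>*\<^sup>* {i} S"
  shows "i \<in> S \<and> S \<subseteq> insert i (nbhd V E {i}) \<and> card (nbhd V E {i}) \<le> card (nbhd V E S)"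
  using assms
proof (induction rule: rtranclp_induct)
  case (step S S')
  then obtain k where "k \<in> nbhd V E {i} - S" "0 < f1 V E S k" "S' = insert k S"
    by (auto simp: greedy_step_def)
  with step.IH show ?case by (auto simp: f1_def)
qed simp

lemma card_new_nbhd_le_one:
  assumes "finite V" and a: "a \<in> nbhd V E S" and gain: "f1 V E S a \<le> 0"
  shows "card (nbhd V E (insert a S) - nbhd V E S) \<le> 1"
proof -
  let ?N = "nbhd V E S" and ?N' = "nbhd V E (insert a S)"
  have fin: "finite ?N" "finite ?N'"
    using \<open>finite V\<close> by (simp_all add: finite_nbhd)
  have "card (?N - {a}) + card (?N' - ?N) = card ((?N - {a}) \<union> (?N' - ?N))"
    using fin by (intro card_Un_disjoint[symmetric]) auto
  also have "\<dots> \<le> card ?N'"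
    using fin by (intro card_mono) (auto simp: nbhd_def)
  finally show ?thesis
    using a fin gain by (simp add: f1_def)
qed

lemma card_second_nbhd_le_greedy:
  assumes sg: "simple_graph V E" and out: "greedy_output V E i S"
  shows "card (nbhd V E (insert i (nbhd V E {i}))) \<le> card (nbhd V E S)"
proof -
  define A where "A = nbhd V E {i}"
  define W where "W = nbhd V E (insert i A)"
  define gain where "gain a = nbhd V E (insert a S) - nbhd V E S" for a
  have finV: "finite V" using sg by (simp add: simple_graph_def)
  have iS: "i \<in> S" and SA: "S \<subseteq> insert i A"
    using greedy_reachable_invariant out by (auto simp: greedy_output_def A_def)
  have AS: "A - S \<subseteq> nbhd V E S"
    using iS by (auto simp: A_def nbhd_def)
  have gain_le: "card (gain a) \<le> 1" if "a \<in> A - S" for a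
  proof -
    have "\<not> 0 < f1 V E S a"
      using that out by (auto simp: greedy_output_def greedy_stops_def A_def)
    then show ?thesis
      using that AS finV card_new_nbhd_le_one[of V a E S] by (auto simp: gain_def)
  qed
  have "W - nbhd V E S \<subseteq> (\<Union>a\<in>A - S. gain a)"
  proof
    fix w assume w: "w \<in> W - nbhd V E S"
    then obtain a where "a \<in> A" "E a w" "w \<in> V" "w \<notin> insert i A"
      using sg by (auto simp: W_def nbhd_def A_def simple_graph_def)
    with w SA show "w \<in> (\<Union>a\<in>A - S. gain a)"
      by (auto simp: gain_def nbhd_def)
  qed
  then have "card (W - nbhd V E S) \<le> card (\<Union>a\<in>A - S. gain a)"
    using finV by (intro card_mono) (auto simp: gain_def A_def finite_nbhd)
  also have "\<dots> \<le> (\<Sum>a\<in>A - S. card (gain a))"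
    by (rule card_UN_le) (simp add: A_def finV finite_nbhd)
  also have "\<dots> \<le> card (A - S)"
    using gain_le sum_mono[of "A - S" "\<lambda>a. card (gain a)" "\<lambda>_. 1"] by simp
  finally have missed: "card (W - nbhd V E S) \<le> card (A - S)" .
  have finW: "finite W" and finA: "finite A"
    using finV by (simp_all add: W_def A_def finite_nbhd)
  have "card W \<le> card (W \<inter> nbhd V E S) + card (W - nbhd V E S)"
    by (metis Int_Diff_Un card_Un_le)
  also have "\<dots> \<le> card (W \<inter> nbhd V E S) + card (A - S)"
    using missed by simp
  also have "\<dots> = card ((W \<inter> nbhd V E S) \<union> (A - S))"
    using finW finA by (intro card_Un_disjoint[symmetric]) (auto simp: W_def nbhd_def)
  also have "\<dots> \<le> card (nbhd V E S)"
    using AS finV by (intro card_mono) (auto simp: finite_nbhd)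
  finally show ?thesis by (simp add: W_def A_def)
qed

theorem star_centrality_le_twice_greedy:
  assumes sg: "simple_graph V E" and iV: "i \<in> V" and out: "greedy_output V E i S"
  shows "star_centrality V E i \<le> 2 * card (nbhd V E S)"
proof (rule star_centrality_le[OF iV sg])
  fix S' assume st: "induced_star_at V E S' i"
  let ?T = "insert i (nbhd V E {i})"
  have finV: "finite V" using sg by (simp add: simple_graph_def)
  have "nbhd V E S' \<subseteq> (?T - S') \<union> nbhd V E ?T"
    using induced_star_subset_closed_nbhd[OF sg st] by (rule nbhd_subset_of_subset)
  also have "\<dots> \<subseteq> nbhd V E {i} \<union> nbhd V E ?T"
    using st by (auto simp: induced_star_at_def)
  finally have "card (nbhd V E S') \<le> card (nbhd V E {i}) + card (nbhd V E ?T)"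
    using finV by (meson card_Un_le card_mono finite_UnI finite_nbhd le_trans)
  also have "\<dots> \<le> 2 * card (nbhd V E S)"
    using greedy_reachable_invariant card_second_nbhd_le_greedy[OF sg out] out
    by (fastforce simp: greedy_output_def)
  finally show "card (nbhd V E S') \<le> 2 * card (nbhd V E S)" .
qed

theorem lemma1:
  shows "\<exists>c::real. 0 < c \<and>
    (\<forall>V E i S. simple_graph V E \<longrightarrow> i \<in> V \<longrightarrow>
       (\<forall>a \<in> nbhd V E {i}. \<forall>b \<in> nbhd V E {i}. \<not> E a b) \<longrightarrow>
       greedy_output V E i S \<longrightarrow>
       real (star_centrality V E i)
         \<le> c * (1 + ln (real (degree V E i))) * real (card (nbhd V E S)))"
proof (intro exI[of _ 2] conjI allI impI)
  fix V E i S
  assume sg: "simple_graph V E" and iV: "i \<in> V" and out: "greedy_output V E i S"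
  have "0 \<le> ln (real (degree V E i))"
    by (cases "degree V E i = 0") auto
  then have "2 * real (card (nbhd V E S))
      \<le> 2 * (1 + ln (real (degree V E i))) * real (card (nbhd V E S))"
    by (simp add: mult_right_mono)
  with star_centrality_le_twice_greedy[OF sg iV out]
  show "real (star_centrality V E i)
      \<le> 2 * (1 + ln (real (degree V E i))) * real (card (nbhd V E S))"
    by linarith
qed simp

end
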